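(* The real form $$O'_{(4,1)}(x,y,z,w)=w^8+x^4y^2z^2+y^4x^2z^2+z^4x^2y^2-4x^2y^2z^2w^2$$ is an extremal element of $\mathcal P_{4,8}$.
   Context: $\mathcal P_{n,m}$ denotes the convex cone of all positive semidefinite real forms in $n$ variables of degree $m$. A form $F\in\mathcal P_{n,m}$ is extremal if $F=F_1+F_2$ with $F_1,F_2\in\mathcal P_{n,m}$ implies $F_i=\lambda_iF$ for some nonnegative reals $\lambda_i$. *)

theory Defs
  imports Complex_Main
begin

text \<open>Real forms in the 4 variables x,y,z,w, represented as polynomial functions
  (over the reals a polynomial function determines its coefficients).\<close>

type_synonym form4 = "real \<Rightarrow> real \<Rightarrow> real \<Rightarrow> real \<Rightarrow> real"

definition is_form4 :: "nat \<Rightarrow> form4 \<Rightarrow> bool" where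
  "is_form4 m F \<longleftrightarrow>
     (\<exists>coef :: nat \<Rightarrow> nat \<Rightarrow> nat \<Rightarrow> nat \<Rightarrow> real.
        \<forall>x y z w. F x y z w =
          (\<Sum>a\<le>m. \<Sum>b\<le>m. \<Sum>c\<le>m. \<Sum>d\<le>m.
             if a + b + c + d = m then coef a b c d * x ^ a * y ^ b * z ^ c * w ^ d else 0))"

definition P4 :: "nat \<Rightarrow> form4 set" where
  "P4 m = {F. is_form4 m F \<and> (\<forall>x y z w. F x y z w \<ge> 0)}"

definition extremal_in :: "form4 set \<Rightarrow> form4 \<Rightarrow> bool" where
  "extremal_in C F \<longleftrightarrow> F \<in> C \<and>
     (\<forall>F1\<in>C. \<forall>F2\<in>C. F = (\<lambda>x y z w. F1 x y z w + F2 x y z w) \<longrightarrow>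
        (\<exists>l1 l2 :: real. l1 \<ge> 0 \<and> l2 \<ge> 0 \<and>
           F1 = (\<lambda>x y z w. l1 * F x y z w) \<and> F2 = (\<lambda>x y z w. l2 * F x y z w)))"

definition O41' :: form4 where
  "O41' = (\<lambda>x y z w. w^8 + x^4*y^2*z^2 + y^4*x^2*z^2 + z^4*x^2*y^2 - 4*x^2*y^2*z^2*w^2)"

end

theory Submission
  imports Defs
begin

text \<open>
  Writing x^2 = P^3, y^2 = Q^3, z^2 = R^3, w^2 = A and B = PQR, the form O41' equals
  (A - B)^2 ((A + B)^2 + 2B^2) + B^3 (P + Q + R) ((P - Q)^2 + (Q - R)^2 + (R - P)^2) / 2,
  hence is nonnegative. For extremality it suffices that every nonnegative form G \<le> O41' is a
  multiple of O41'. Such a G is O(t^8) along the scalings (t^4 x, y, z, t w) and their permutations,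
  which forces its monomials into the Newton polytope of O41'. Moreover G vanishes, together with
  its gradient, at the eight zeros (\<plusminus>1, \<plusminus>1, \<plusminus>1, 1) of O41'; averaging these conditions
  against the characters of {-1, 1}^3 gives linear equations whose only solutions are
  the multiples of O41'.
\<close>

definition monomial_sum :: "(nat \<times> nat \<times> nat \<times> nat) set \<Rightarrow> (nat \<Rightarrow> nat \<Rightarrow> nat \<Rightarrow> nat \<Rightarrow> real) \<Rightarrow> form4"
  where "monomial_sum S C x y z w = (\<Sum>(a, b, c, d)\<in>S. C a b c d * x^a * y^b * z^c * w^d)"

definition monomials :: "nat \<Rightarrow> (nat \<times> nat \<times> nat \<times> nat) set"
  where "monomials m = {(a, b, c, d). a + b + c + d = m}"

lemma monomials_subset_box: "monomials m \<subseteq> {..m} \<times> {..m} \<times> {..m} \<times> {..m}"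
  by (auto simp: monomials_def)

lemma finite_monomials: "finite (monomials m)"
  using monomials_subset_box by (rule finite_subset) simp

lemma monomial_sum_box:
  "monomial_sum ({..n} \<times> {..n} \<times> {..n} \<times> {..n}) C x y z w =
     (\<Sum>a\<le>n. \<Sum>b\<le>n. \<Sum>c\<le>n. \<Sum>d\<le>n. C a b c d * x^a * y^b * z^c * w^d)"
  by (simp add: monomial_sum_def sum.cartesian_product)

lemma monomial_sum_extend:
  assumes "finite T" "S \<subseteq> T"
  shows "monomial_sum S C = monomial_sum T (\<lambda>a b c d. if (a, b, c, d) \<in> S then C a b c d else 0)"
  using assms by (auto simp: monomial_sum_def fun_eq_iff intro: sum.mono_neutral_cong_left)

lemma monomial_sum_monomials:
  "monomial_sum (monomials m) C x y z w =
     (\<Sum>a\<le>m. \<Sum>b\<le>m. \<Sum>c\<le>m. \<Sum>d\<le>m. if a + b + c + d = m then C a b c d * x^a * y^b * z^c * w^d else 0)"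
  (is "_ = ?rhs")
proof -
  have "monomial_sum (monomials m) C x y z w = monomial_sum ({..m} \<times> {..m} \<times> {..m} \<times> {..m})
      (\<lambda>a b c d. if (a, b, c, d) \<in> monomials m then C a b c d else 0) x y z w"
    by (simp add: monomial_sum_extend[OF _ monomials_subset_box])
  also have "\<dots> = ?rhs"
    unfolding monomial_sum_box by (intro sum.cong refl) (simp add: monomials_def)
  finally show ?thesis .
qed

lemma is_form4_iff_monomial_sum: "is_form4 m F \<longleftrightarrow> (\<exists>C. F = monomial_sum (monomials m) C)"
  unfolding is_form4_def monomial_sum_monomials fun_eq_iff ..

lemma is_form4_monomial_sum: "S \<subseteq> monomials m \<Longrightarrow> is_form4 m (monomial_sum S C)"
  unfolding is_form4_iff_monomial_sum
  using monomial_sum_extend[OF finite_monomials] by blast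

lemma nested_polyfun_eq_0:
  fixes C :: "nat \<Rightarrow> nat \<Rightarrow> nat \<Rightarrow> nat \<Rightarrow> real"
  assumes zero: "\<And>x y z w. (\<Sum>a\<le>n. \<Sum>b\<le>n. \<Sum>c\<le>n. \<Sum>d\<le>n. C a b c d * x^a * y^b * z^c * w^d) = 0"
    and "a \<le> n" "b \<le> n" "c \<le> n" "d \<le> n"
  shows "C a b c d = 0"
proof -
  have zero_a: "(\<Sum>b\<le>n. \<Sum>c\<le>n. \<Sum>d\<le>n. C a b c d * y^b * z^c * w^d) = 0" if "a \<le> n" for a y z w
  proof -
    have "(\<Sum>a\<le>n. \<Sum>b\<le>n. \<Sum>c\<le>n. \<Sum>d\<le>n. C a b c d * x^a * y^b * z^c * w^d)
        = (\<Sum>a\<le>n. (\<Sum>b\<le>n. \<Sum>c\<le>n. \<Sum>d\<le>n. C a b c d * y^b * z^c * w^d) * x^a)" for x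
      by (simp add: sum_distrib_left sum_distrib_right mult_ac)
    then have "\<forall>x. (\<Sum>a\<le>n. (\<Sum>b\<le>n. \<Sum>c\<le>n. \<Sum>d\<le>n. C a b c d * y^b * z^c * w^d) * x^a) = 0"
      using zero by metis
    then show ?thesis using that by (simp only: polyfun_eq_0)
  qed
  have zero_ab: "(\<Sum>c\<le>n. \<Sum>d\<le>n. C a b c d * z^c * w^d) = 0" if "a \<le> n" "b \<le> n" for a b z w
  proof -
    have "(\<Sum>b\<le>n. \<Sum>c\<le>n. \<Sum>d\<le>n. C a b c d * y^b * z^c * w^d)
        = (\<Sum>b\<le>n. (\<Sum>c\<le>n. \<Sum>d\<le>n. C a b c d * z^c * w^d) * y^b)" for y
      by (simp add: sum_distrib_left sum_distrib_right mult_ac)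
    then have "\<forall>y. (\<Sum>b\<le>n. (\<Sum>c\<le>n. \<Sum>d\<le>n. C a b c d * z^c * w^d) * y^b) = 0"
      using zero_a[OF \<open>a \<le> n\<close>] by metis
    then show ?thesis using that by (simp only: polyfun_eq_0)
  qed
  have zero_abc: "(\<Sum>d\<le>n. C a b c d * w^d) = 0" if "a \<le> n" "b \<le> n" "c \<le> n" for a b c w
  proof -
    have "(\<Sum>c\<le>n. \<Sum>d\<le>n. C a b c d * z^c * w^d) = (\<Sum>c\<le>n. (\<Sum>d\<le>n. C a b c d * w^d) * z^c)" for z
      by (simp add: sum_distrib_left sum_distrib_right mult_ac)
    then have "\<forall>z. (\<Sum>c\<le>n. (\<Sum>d\<le>n. C a b c d * w^d) * z^c) = 0"
      using zero_ab[OF that(1,2)] by metis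
    then show ?thesis using that by (simp only: polyfun_eq_0)
  qed
  have "\<forall>w. (\<Sum>d\<le>n. C a b c d * w^d) = 0"
    using zero_abc assms(2-4) by blast
  then show ?thesis using assms(5) by (simp only: polyfun_eq_0)
qed

lemma monomial_sum_eq_0_imp_coeff_eq_0:
  assumes "finite S" and zero: "\<And>x y z w. monomial_sum S C x y z w = 0" and "(a, b, c, d) \<in> S"
  shows "C a b c d = 0"
proof -
  define n where "n = Max ((\<lambda>(a, b, c, d). a + b + c + d) ` S)"
  have "a + b + c + d \<le> n" if "(a, b, c, d) \<in> S" for a b c d
    unfolding n_def using \<open>finite S\<close> that
    by (metis (no_types, lifting) Max_ge finite_imageI image_eqI case_prod_conv)
  then have box: "S \<subseteq> {..n} \<times> {..n} \<times> {..n} \<times> {..n}"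
    by fastforce
  let ?C = "\<lambda>a b c d. if (a, b, c, d) \<in> S then C a b c d else 0"
  have extend: "monomial_sum S C = monomial_sum ({..n} \<times> {..n} \<times> {..n} \<times> {..n}) ?C"
    by (rule monomial_sum_extend[OF _ box]) simp
  have "?C a b c d = 0"
  proof (rule nested_polyfun_eq_0)
    show "(\<Sum>a\<le>n. \<Sum>b\<le>n. \<Sum>c\<le>n. \<Sum>d\<le>n. ?C a b c d * x^a * y^b * z^c * w^d) = 0" for x y z w
      using zero[of x y z w] unfolding extend monomial_sum_box .
  qed (use box \<open>(a, b, c, d) \<in> S\<close> in auto)
  then show ?thesis using \<open>(a, b, c, d) \<in> S\<close> by simp
qed

lemma coeff_eq_0_if_bounded_by_power:
  fixes e :: "nat \<Rightarrow> real"
  assumes bound: "\<And>t. 0 < t \<Longrightarrow> t \<le> 1 \<Longrightarrow> \<bar>\<Sum>i\<le>n. e i * t^i\<bar> \<le> M * t^k"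
  shows "j < k \<Longrightarrow> j \<le> n \<Longrightarrow> e j = 0"
proof (induction j rule: less_induct)
  case (less j)
  define g where "g t = (\<Sum>i\<le>n. e i * t^(i - j))" for t :: real
  have factor: "(\<Sum>i\<le>n. e i * t^i) = t^j * g t" for t :: real
    unfolding g_def sum_distrib_left
  proof (intro sum.cong refl)
    fix i show "e i * t^i = t^j * (e i * t^(i - j))"
      using less by (cases "i < j") (auto simp: power_add[symmetric])
  qed
  have "g 0 = (\<Sum>i\<le>n. if i = j then e j else 0)"
    unfolding g_def using less by (intro sum.cong) auto
  then have g0: "g 0 = e j"
    using less.prems by simp
  have "\<bar>g t\<bar> \<le> M * t" if "0 < t" "t \<le> 1" for t
  proof -
    have "t^j * \<bar>g t\<bar> \<le> M * t^k"
      using bound[OF that] that by (simp add: factor abs_mult)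
    also have "\<dots> = t^j * (M * t^(k - j))"
      using less.prems by (simp add: power_add[symmetric])
    finally have "\<bar>g t\<bar> \<le> M * t^(k - j)"
      by (rule mult_left_le_imp_le) (simp add: that)
    also have "\<dots> \<le> M * t"
      using that less.prems power_decreasing[of 1 "k - j" t] bound[of 1] by (intro mult_left_mono) auto
    finally show ?thesis .
  qed
  then have "\<forall>\<^sub>F t in at_right 0. norm (g t) \<le> norm t * M"
    unfolding eventually_at_right_field by (intro exI[of _ 1]) (auto simp: mult.commute)
  then have "(g \<longlongrightarrow> 0) (at_right 0)"
    by (rule tendsto_0_le[OF tendsto_ident_at])
  moreover have "(g \<longlongrightarrow> g 0) (at_right 0)"
    unfolding g_def by (intro tendsto_intros)
  ultimately have "g 0 = 0"
    using tendsto_unique trivial_limit_at_right_real by blast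
  then show ?case
    using g0 by simp
qed

lemma monomial_sum_scaled:
  assumes "finite S" and N: "\<And>a b c d. (a, b, c, d) \<in> S \<Longrightarrow> p*a + q*b + r*c + s*d \<le> N"
  shows "monomial_sum S C (t^p * x) (t^q * y) (t^r * z) (t^s * w) =
    (\<Sum>j\<le>N. monomial_sum S (\<lambda>a b c d. if p*a + q*b + r*c + s*d = j then C a b c d else 0) x y z w * t^j)"
    (is "_ = ?rhs")
proof -
  have "monomial_sum S C (t^p * x) (t^q * y) (t^r * z) (t^s * w) =
      (\<Sum>(a, b, c, d)\<in>S. \<Sum>j\<le>N. if p*a + q*b + r*c + s*d = j
         then C a b c d * x^a * y^b * z^c * w^d * t^j else 0)"
    unfolding monomial_sum_def
  proof (intro sum.cong refl, clarify)
    fix a b c d assume "(a, b, c, d) \<in> S"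
    then show "C a b c d * (t^p * x)^a * (t^q * y)^b * (t^r * z)^c * (t^s * w)^d =
      (\<Sum>j\<le>N. if p*a + q*b + r*c + s*d = j then C a b c d * x^a * y^b * z^c * w^d * t^j else 0)"
      using N by (simp add: power_mult_distrib power_add power_mult[symmetric] mult_ac)
  qed
  also have "\<dots> = (\<Sum>j\<le>N. \<Sum>(a, b, c, d)\<in>S. if p*a + q*b + r*c + s*d = j
         then C a b c d * x^a * y^b * z^c * w^d * t^j else 0)"
    unfolding split_def by (rule sum.swap)
  also have "\<dots> = ?rhs"
    unfolding monomial_sum_def sum_distrib_right by (intro sum.cong refl) auto
  finally show ?thesis .
qed

lemma monomial_sum_coeff_eq_0_if_low_weight:
  assumes "finite S"
    and bound: "\<And>x y z w t. 0 < t \<Longrightarrow> t \<le> 1 \<Longrightarrow>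
      \<bar>monomial_sum S C (t^p * x) (t^q * y) (t^r * z) (t^s * w)\<bar> \<le> M x y z w * t^k"
    and "(a, b, c, d) \<in> S" and low: "p*a + q*b + r*c + s*d < k"
  shows "C a b c d = 0"
proof -
  define wt where "wt a b c d = p*a + q*b + r*c + s*d" for a b c d
  define N where "N = Max ((\<lambda>(a, b, c, d). wt a b c d) ` S)"
  define part where "part j a b c d = (if wt a b c d = j then C a b c d else 0)" for j a b c d
  have le_N: "wt a b c d \<le> N" if "(a, b, c, d) \<in> S" for a b c d
    unfolding N_def using \<open>finite S\<close> that
    by (metis (no_types, lifting) Max_ge finite_imageI image_eqI case_prod_conv)
  have "monomial_sum S (part (wt a b c d)) x y z w = 0" for x y z w
  proof (rule coeff_eq_0_if_bounded_by_power)
    fix t :: real assume "0 < t" "t \<le> 1"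
    have "monomial_sum S C (t^p * x) (t^q * y) (t^r * z) (t^s * w) =
        (\<Sum>j\<le>N. monomial_sum S (part j) x y z w * t^j)"
      unfolding part_def wt_def by (rule monomial_sum_scaled[OF \<open>finite S\<close>]) (use le_N in \<open>simp add: wt_def\<close>)
    then show "\<bar>\<Sum>j\<le>N. monomial_sum S (part j) x y z w * t^j\<bar> \<le> M x y z w * t^k"
      using bound[OF \<open>0 < t\<close> \<open>t \<le> 1\<close>, of x y z w] by simp
  qed (use low le_N \<open>(a, b, c, d) \<in> S\<close> in \<open>auto simp: wt_def\<close>)
  then have "part (wt a b c d) a b c d = 0"
    by (rule monomial_sum_eq_0_imp_coeff_eq_0[OF \<open>finite S\<close> _ \<open>(a, b, c, d) \<in> S\<close>])
  then show ?thesis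
    by (simp add: part_def)
qed

lemma scaled_monomial_has_derivative:
  "((\<lambda>t. e * (t^p * x)^a * (t^q * y)^b * (t^r * z)^c * (t^s * w)^d) has_real_derivative
     of_nat (p*a + q*b + r*c + s*d) * e * x^a * y^b * z^c * w^d) (at 1)"
proof -
  have "(\<lambda>t. e * (t^p * x)^a * (t^q * y)^b * (t^r * z)^c * (t^s * w)^d) =
      (\<lambda>t. e * x^a * y^b * z^c * w^d * t^(p*a + q*b + r*c + s*d))"
    by (simp add: fun_eq_iff power_mult_distrib power_add power_mult[symmetric] mult_ac)
  moreover have "((\<lambda>t. e * x^a * y^b * z^c * w^d * t^(p*a + q*b + r*c + s*d)) has_real_derivative
      e * x^a * y^b * z^c * w^d * of_nat (p*a + q*b + r*c + s*d)) (at 1)"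
    using DERIV_cmult[OF DERIV_pow[of "p*a + q*b + r*c + s*d" 1]] by simp
  ultimately show ?thesis
    by (simp add: mult_ac)
qed

lemma monomial_sum_scaled_has_derivative:
  "((\<lambda>t. monomial_sum S C (t^p * x) (t^q * y) (t^r * z) (t^s * w)) has_real_derivative
     monomial_sum S (\<lambda>a b c d. of_nat (p*a + q*b + r*c + s*d) * C a b c d) x y z w) (at 1)"
  unfolding monomial_sum_def split_def
  by (intro DERIV_sum scaled_monomial_has_derivative)

lemma nonneg_monomial_sum_critical:
  assumes nonneg: "\<And>x y z w. 0 \<le> monomial_sum S C x y z w"
    and zero: "monomial_sum S C x y z w = 0"
  shows "monomial_sum S (\<lambda>a b c d. of_nat (p*a + q*b + r*c + s*d) * C a b c d) x y z w = 0"
  by (rule DERIV_local_min[OF monomial_sum_scaled_has_derivative zero_less_one]) (simp add: zero nonneg)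

lemma sum_signs_power: "(\<Sum>x\<in>{-1, 1::real}. x^n) = (if even n then 2 else 0)"
  by simp

lemma sign_sum_monomial_sum:
  "(\<Sum>x\<in>{-1, 1}. \<Sum>y\<in>{-1, 1}. \<Sum>z\<in>{-1, 1}. x^i * y^j * z^k * monomial_sum S C x y z 1) =
     8 * (\<Sum>(a, b, c, d)\<in>S. if even (a + i) \<and> even (b + j) \<and> even (c + k) then C a b c d else 0)"
proof -
  have "(\<Sum>x\<in>{-1, 1}. \<Sum>y\<in>{-1, 1}. \<Sum>z\<in>{-1, 1}. x^i * y^j * z^k * monomial_sum S C x y z 1) =
      (\<Sum>(a, b, c, d)\<in>S. C a b c d *
         ((\<Sum>x\<in>{-1, 1::real}. x^(a + i)) * (\<Sum>y\<in>{-1, 1::real}. y^(b + j)) * (\<Sum>z\<in>{-1, 1::real}. z^(c + k))))"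
    unfolding monomial_sum_def sum_distrib_left
    by (simp add: sum.distrib[symmetric] split_def algebra_simps power_add)
  also have "\<dots> = 8 * (\<Sum>(a, b, c, d)\<in>S. if even (a + i) \<and> even (b + j) \<and> even (c + k) then C a b c d else 0)"
    unfolding sum_signs_power sum_distrib_left by (intro sum.cong refl) (auto simp: split_def)
  finally show ?thesis .
qed

lemma O41'_nonneg: "0 \<le> O41' x y z w"
proof -
  define P Q R where "P = root 3 (x^2)" and "Q = root 3 (y^2)" and "R = root 3 (z^2)"
  define A B where "A = w^2" and "B = P * Q * R"
  have "P \<ge> 0" "Q \<ge> 0" "R \<ge> 0"
    unfolding P_def Q_def R_def by simp_all
  have cubes: "x^2 = P^3" "y^2 = Q^3" "z^2 = R^3"
    unfolding P_def Q_def R_def by (simp_all add: real_root_pow_pos2)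
  have "O41' x y z w = A^4 + (x^2)^2 * y^2 * z^2 + (y^2)^2 * x^2 * z^2 + (z^2)^2 * x^2 * y^2 - 4 * x^2 * y^2 * z^2 * A"
    unfolding O41'_def A_def by (simp flip: power_mult)
  also have "\<dots> = A^4 + (P^3)^2 * Q^3 * R^3 + (Q^3)^2 * P^3 * R^3 + (R^3)^2 * P^3 * Q^3 - 4 * P^3 * Q^3 * R^3 * A"
    unfolding cubes ..
  also have "\<dots> = (A - B)^2 * ((A + B)^2 + 2 * B^2) + B^3 * (P + Q + R) * ((P - Q)^2 + (Q - R)^2 + (R - P)^2) / 2"
    unfolding B_def by (simp add: field_simps power2_eq_square power3_eq_cube power4_eq_xxxx)
  finally show ?thesis
    using \<open>P \<ge> 0\<close> \<open>Q \<ge> 0\<close> \<open>R \<ge> 0\<close> by (simp add: B_def)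
qed

lemma O41'_eq_monomial_sum:
  "O41' = monomial_sum {(0,0,0,8), (4,2,2,0), (2,4,2,0), (2,2,4,0), (2,2,2,2)}
     (\<lambda>a b c d. if (a, b, c, d) = (2,2,2,2) then -4 else 1)"
  by (simp add: fun_eq_iff O41'_def monomial_sum_def algebra_simps)

lemma is_form4_O41': "is_form4 8 O41'"
  unfolding O41'_eq_monomial_sum by (rule is_form4_monomial_sum) (simp add: monomials_def)

lemma O41'_swap_xy: "O41' x y z w = O41' y x z w"
  and O41'_swap_xz: "O41' x y z w = O41' z y x w"
  unfolding O41'_def by (simp_all add: algebra_simps)

lemma O41'_scaled_x_le:
  assumes "0 < t" "t \<le> 1"
  shows "O41' (t^4 * x) y z (t * w) \<le> (w^8 + x^2 * y^2 * z^2 * (x^2 + y^2 + z^2)) * t^8"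
proof -
  have "t^16 * (x^4 * y^2 * z^2) \<le> t^8 * (x^4 * y^2 * z^2)"
    using assms by (intro mult_right_mono power_decreasing) auto
  moreover have "0 \<le> t^10 * (x^2 * y^2 * z^2 * w^2)"
    using assms by simp
  moreover have "O41' (t^4 * x) y z (t * w) = t^8 * w^8 + t^16 * (x^4 * y^2 * z^2) + t^8 * (y^4 * x^2 * z^2)
      + t^8 * (z^4 * x^2 * y^2) - 4 * (t^10 * (x^2 * y^2 * z^2 * w^2))"
    unfolding O41'_def by (simp add: power_mult_distrib power_mult[symmetric] algebra_simps)
  moreover have "(w^8 + x^2 * y^2 * z^2 * (x^2 + y^2 + z^2)) * t^8 =
      t^8 * w^8 + t^8 * (x^4 * y^2 * z^2) + t^8 * (y^4 * x^2 * z^2) + t^8 * (z^4 * x^2 * y^2)"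
    by (simp add: algebra_simps flip: power_add)
  ultimately show ?thesis
    by linarith
qed

lemma O41'_scaled_le:
  assumes "0 < t" "t \<le> 1"
  shows "O41' (t^4 * x) y z (t * w) \<le> (w^8 + x^2 * y^2 * z^2 * (x^2 + y^2 + z^2)) * t^8"
    and "O41' x (t^4 * y) z (t * w) \<le> (w^8 + x^2 * y^2 * z^2 * (x^2 + y^2 + z^2)) * t^8"
    and "O41' x y (t^4 * z) (t * w) \<le> (w^8 + x^2 * y^2 * z^2 * (x^2 + y^2 + z^2)) * t^8"
proof -
  show "O41' (t^4 * x) y z (t * w) \<le> (w^8 + x^2 * y^2 * z^2 * (x^2 + y^2 + z^2)) * t^8"
    using O41'_scaled_x_le[OF assms] .
  have "O41' x (t^4 * y) z (t * w) \<le> (w^8 + y^2 * x^2 * z^2 * (y^2 + x^2 + z^2)) * t^8"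
    using O41'_scaled_x_le[OF assms] O41'_swap_xy by metis
  then show "O41' x (t^4 * y) z (t * w) \<le> (w^8 + x^2 * y^2 * z^2 * (x^2 + y^2 + z^2)) * t^8"
    by (simp only: ac_simps)
  have "O41' x y (t^4 * z) (t * w) \<le> (w^8 + z^2 * y^2 * x^2 * (z^2 + y^2 + x^2)) * t^8"
    using O41'_scaled_x_le[OF assms] O41'_swap_xz by metis
  then show "O41' x y (t^4 * z) (t * w) \<le> (w^8 + x^2 * y^2 * z^2 * (x^2 + y^2 + z^2)) * t^8"
    by (simp only: ac_simps)
qed

text \<open>The lattice points of the Newton polytope of O41', the simplex spanned by the exponents
  (0,0,0,8), (4,2,2,0), (2,4,2,0), (2,2,4,0).\<close>
definition newton_monomials :: "(nat \<times> nat \<times> nat \<times> nat) set" where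
  "newton_monomials = {(0,0,0,8), (1,1,1,5), (1,1,2,4), (1,2,1,4), (2,1,1,4), (2,2,2,2),
     (2,2,3,1), (2,2,4,0), (2,3,2,1), (2,3,3,0), (2,4,2,0), (3,2,2,1), (3,2,3,0), (3,3,2,0), (4,2,2,0)}"

lemma newton_monomials_subset: "newton_monomials \<subseteq> monomials 8"
  by (simp add: newton_monomials_def monomials_def)

lemma monomials_8_low_weight_or_newton:
  assumes "(a, b, c, d) \<in> monomials 8"
  shows "4*a + d < 8 \<or> 4*b + d < 8 \<or> 4*c + d < 8 \<or> (a, b, c, d) \<in> newton_monomials"
proof (rule ccontr)
  assume "\<not> ?thesis"
  then have weights: "8 \<le> 4*a + d" "8 \<le> 4*b + d" "8 \<le> 4*c + d" and "(a, b, c, d) \<notin> newton_monomials"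
    by auto
  have deg: "a + b + c + d = 8" using assms by (simp add: monomials_def)
  then have "d \<le> 8" by simp
  then consider "d = 0" | "d = 1" | "d = 2" | "d = 3" | "d = 4" | "d = 5" | "d = 6" | "d = 7" | "d = 8"
    by linarith
  then show False
    using weights deg \<open>(a, b, c, d) \<notin> newton_monomials\<close> unfolding newton_monomials_def
    by cases (simp_all, presburger+)
qed

lemma P4_below_O41'_supported_on_newton:
  assumes "G \<in> P4 8" and below: "\<And>x y z w. G x y z w \<le> O41' x y z w"
  obtains C where "G = monomial_sum newton_monomials C"
proof -
  obtain C where G: "G = monomial_sum (monomials 8) C"
    using assms(1) by (auto simp: P4_def is_form4_iff_monomial_sum)
  have abs_G_le: "\<bar>G x y z w\<bar> \<le> O41' x y z w" for x y z w
    using assms by (simp add: P4_def)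
  let ?M = "\<lambda>x y z w. w^8 + x^2 * y^2 * z^2 * (x^2 + y^2 + z^2)"
  have low_weight: "C a b c d = 0"
    if "(a, b, c, d) \<in> monomials 8" "p*a + q*b + r*c + s*d < 8"
      and "\<And>x y z w t. 0 < t \<Longrightarrow> t \<le> 1 \<Longrightarrow> O41' (t^p * x) (t^q * y) (t^r * z) (t^s * w) \<le> M x y z w * t^8"
    for a b c d p q r s M
  proof (rule monomial_sum_coeff_eq_0_if_low_weight[OF finite_monomials _ that(1,2), where M=M])
    fix x y z w t :: real assume "0 < t" "t \<le> 1"
    have "\<bar>G (t^p * x) (t^q * y) (t^r * z) (t^s * w)\<bar> \<le> M x y z w * t^8"
      using abs_G_le that(3)[OF \<open>0 < t\<close> \<open>t \<le> 1\<close>] by (rule order_trans)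
    then show "\<bar>monomial_sum (monomials 8) C (t^p * x) (t^q * y) (t^r * z) (t^s * w)\<bar> \<le> M x y z w * t^8"
      by (simp add: G)
  qed
  have off_newton: "C a b c d = 0" if "(a, b, c, d) \<in> monomials 8" "(a, b, c, d) \<notin> newton_monomials" for a b c d
    using monomials_8_low_weight_or_newton[OF that(1)] that(2)
  proof (elim disjE)
    assume "4*a + d < 8"
    then show ?thesis
      by (intro low_weight[of a b c d 4 0 0 1 ?M, OF that(1)]) (simp_all add: O41'_scaled_le)
  next
    assume "4*b + d < 8"
    then show ?thesis
      by (intro low_weight[of a b c d 0 4 0 1 ?M, OF that(1)]) (simp_all add: O41'_scaled_le)
  next
    assume "4*c + d < 8"
    then show ?thesis
      by (intro low_weight[of a b c d 0 0 4 1 ?M, OF that(1)]) (simp_all add: O41'_scaled_le)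
  qed simp
  have "G x y z w = monomial_sum newton_monomials C x y z w" for x y z w
    unfolding G monomial_sum_def
    by (rule sum.mono_neutral_right[OF finite_monomials newton_monomials_subset]) (clarsimp simp: off_newton)
  then show ?thesis
    by (intro that ext)
qed

lemma newton_form_eq_multiple_of_O41':
  assumes nonneg: "\<And>x y z w. 0 \<le> monomial_sum newton_monomials C x y z w"
    and zero: "\<And>x y z. x \<in> {-1, 1} \<Longrightarrow> y \<in> {-1, 1} \<Longrightarrow> z \<in> {-1, 1} \<Longrightarrow>
      monomial_sum newton_monomials C x y z 1 = 0"
  shows "monomial_sum newton_monomials C = (\<lambda>x y z w. C 0 0 0 8 * O41' x y z w)"
proof -
  have critical: "monomial_sum newton_monomials (\<lambda>a b c d. of_nat (p*a + q*b + r*c + s*d) * C a b c d) x y z 1 = 0"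
    if "x \<in> {-1, 1}" "y \<in> {-1, 1}" "z \<in> {-1, 1}" for x y z p q r s
    by (rule nonneg_monomial_sum_critical[OF nonneg zero[OF that]])
  txt \<open>The index (i, j, k) selects the exponents of parity (i, j, k) in x, y, z. On degree 8
    monomials the weight (1, 1, 1, 1) is 8 times the value, while the unit weights give the partial
    derivatives x d/dx, ..., w d/dw.\<close>
  have parity_class: "8 * (\<Sum>(a, b, c, d)\<in>newton_monomials. if even (a + i) \<and> even (b + j) \<and> even (c + k)
      then of_nat (p*a + q*b + r*c + s*d) * C a b c d else 0) = 0" for i j k p q r s
    unfolding sign_sum_monomial_sum[symmetric] by (intro sum.neutral ballI) (simp only: critical mult_zero_right)
  have odd_classes: "C 1 1 1 5 = 0" "C 2 2 3 1 = 0" "C 2 3 2 1 = 0" "C 3 2 2 1 = 0"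
    "C 1 1 2 4 + C 3 3 2 0 = 0" "C 1 2 1 4 + C 3 2 3 0 = 0" "C 2 1 1 4 + C 2 3 3 0 = 0"
    using parity_class[of 1 1 1 1 1 1 1] parity_class[of 0 0 1 1 1 1 1]
      parity_class[of 0 1 0 1 1 1 1] parity_class[of 1 0 0 1 1 1 1]
      parity_class[of 1 1 0 1 1 1 1] parity_class[of 1 0 1 1 1 1 1] parity_class[of 0 1 1 1 1 1 1]
    by (simp_all add: newton_monomials_def)
  have "C 1 1 2 4 = 0" "C 1 2 1 4 = 0" "C 2 1 1 4 = 0"
    using parity_class[of 1 1 0 0 0 0 1] parity_class[of 1 0 1 0 0 0 1] parity_class[of 0 1 1 0 0 0 1]
    by (simp_all add: newton_monomials_def)
  moreover have "C 2 2 2 2 = -4 * C 0 0 0 8" "C 2 2 4 0 = C 0 0 0 8" "C 2 4 2 0 = C 0 0 0 8" "C 4 2 2 0 = C 0 0 0 8"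
  proof -
    have "C 0 0 0 8 + C 2 2 2 2 + C 2 2 4 0 + C 2 4 2 0 + C 4 2 2 0 = 0"
      "8 * C 0 0 0 8 + 2 * C 2 2 2 2 = 0"
      "2 * C 2 2 2 2 + 2 * C 2 2 4 0 + 2 * C 2 4 2 0 + 4 * C 4 2 2 0 = 0"
      "2 * C 2 2 2 2 + 2 * C 2 2 4 0 + 4 * C 2 4 2 0 + 2 * C 4 2 2 0 = 0"
      "2 * C 2 2 2 2 + 4 * C 2 2 4 0 + 2 * C 2 4 2 0 + 2 * C 4 2 2 0 = 0"
      using parity_class[of 0 0 0 1 1 1 1] parity_class[of 0 0 0 0 0 0 1]
        parity_class[of 0 0 0 1 0 0 0] parity_class[of 0 0 0 0 1 0 0] parity_class[of 0 0 0 0 0 1 0]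
      by (simp_all add: newton_monomials_def)
    then show "C 2 2 2 2 = -4 * C 0 0 0 8" "C 2 2 4 0 = C 0 0 0 8" "C 2 4 2 0 = C 0 0 0 8" "C 4 2 2 0 = C 0 0 0 8"
      by linarith+
  qed
  ultimately show ?thesis
    using odd_classes
    by (simp add: fun_eq_iff monomial_sum_def newton_monomials_def O41'_def algebra_simps)
qed

lemma P4_below_O41'_imp_multiple:
  assumes "G \<in> P4 8" and below: "\<And>x y z w. G x y z w \<le> O41' x y z w"
  shows "\<exists>l\<ge>0. G = (\<lambda>x y z w. l * O41' x y z w)"
proof -
  obtain C where G: "G = monomial_sum newton_monomials C"
    using P4_below_O41'_supported_on_newton[OF assms] .
  have nonneg: "0 \<le> G x y z w" for x y z w
    using assms(1) by (simp add: P4_def)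
  have "G x y z 1 = 0" if "x \<in> {-1, 1}" "y \<in> {-1, 1}" "z \<in> {-1, 1}" for x y z
    using nonneg[of x y z 1] below[of x y z 1] that by (auto simp: O41'_def)
  then have multiple: "G = (\<lambda>x y z w. C 0 0 0 8 * O41' x y z w)"
    unfolding G by (rule newton_form_eq_multiple_of_O41'[OF nonneg[unfolded G]])
  moreover have "0 \<le> C 0 0 0 8"
    using nonneg[of 0 0 0 1] by (simp add: multiple O41'_def)
  ultimately show ?thesis
    by blast
qed

theorem proposition1:
  shows "extremal_in (P4 8) O41'"
  unfolding extremal_in_def
proof (intro conjI ballI impI)
  show "O41' \<in> P4 8"
    by (simp add: P4_def is_form4_O41' O41'_nonneg)
next
  fix F1 F2 assume "F1 \<in> P4 8" "F2 \<in> P4 8" and sum: "O41' = (\<lambda>x y z w. F1 x y z w + F2 x y z w)"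
  have "O41' x y z w = F1 x y z w + F2 x y z w" for x y z w
    using sum by meson
  then have "F1 x y z w \<le> O41' x y z w" "F2 x y z w \<le> O41' x y z w" for x y z w
    using \<open>F1 \<in> P4 8\<close> \<open>F2 \<in> P4 8\<close> by (simp_all add: P4_def)
  with \<open>F1 \<in> P4 8\<close> \<open>F2 \<in> P4 8\<close> show "\<exists>l1 l2. 0 \<le> l1 \<and> 0 \<le> l2 \<and>
      F1 = (\<lambda>x y z w. l1 * O41' x y z w) \<and> F2 = (\<lambda>x y z w. l2 * O41' x y z w)"
    using P4_below_O41'_imp_multiple by meson
qed

end
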